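(* Let $g:\{0,1,2,3\}^*\to\{0,1,2,3\}^*$ be the morphism $g(0)=01$, $g(1)=20$, $g(2)=23$, $g(3)=02$, and $\tau$ the coding $\tau(0)=2$, $\tau(1)=1$, $\tau(2)=0$, $\tau(3)=1$; let $\mathbf{vtm}=\tau(g^\omega(0))$, an infinite word over $\{0,1,2\}$. Let $\Delta$ be a finite alphabet and $h:\{0,1,2\}^*\to\Delta^*$ a morphism such that $h(0),h(1),h(2)$ are not all empty. If the three lengths $|h(0)|,|h(1)|,|h(2)|$ form an arithmetic progression, then the infinite word $h(\mathbf{vtm})$ is $2$-automatic.
   Context: $g^\omega(0)$ denotes the infinite fixed point of $g$ starting with $0$. An infinite word $(a_n)_{n\ge0}$ is $2$-automatic if there is a deterministic finite automaton with output that, on input the base-$2$ representation of $n$ (most significant digit first), outputs $a_n$; equivalently, it is the image under a coding of a fixed point of a $2$-uniform morphism. *)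

theory Defs
  imports Main
begin

definition gsym :: "nat \<Rightarrow> nat list" where
  "gsym a = (if a = 0 then [0,1] else if a = 1 then [2,0] else if a = 2 then [2,3] else [0,2])"

definition gmor :: "nat list \<Rightarrow> nat list" where
  "gmor xs = concat (map gsym xs)"

text \<open>The infinite fixed point g^omega(0): the limit of the words g^k(0); since
  g^k(0) has length 2^k and is a prefix of g^(k+1)(0), the n-th letter is
  the n-th letter of g^(n+1)(0).\<close>
definition gomega :: "nat \<Rightarrow> nat" where
  "gomega n = ((gmor ^^ Suc n) [0]) ! n"

definition tau :: "nat \<Rightarrow> nat" where
  "tau a = (if a = 0 then 2 else if a = 1 then 1 else if a = 2 then 0 else 1)"

definition vtm :: "nat \<Rightarrow> nat" where
  "vtm n = tau (gomega n)"

definition morph_prefix :: "(nat \<Rightarrow> 'd list) \<Rightarrow> (nat \<Rightarrow> nat) \<Rightarrow> nat \<Rightarrow> 'd list" where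
  "morph_prefix h w k = concat (map (\<lambda>i. h (w i)) [0..<k])"

definition morph_image :: "(nat \<Rightarrow> 'd list) \<Rightarrow> (nat \<Rightarrow> nat) \<Rightarrow> nat \<Rightarrow> 'd" where
  "morph_image h w n =
     morph_prefix h w (LEAST k. n < length (morph_prefix h w k)) ! n"

text \<open>Base-2 representation, most significant digit first, no leading zeros
  (0 is represented by the empty word).\<close>
fun bin_msd :: "nat \<Rightarrow> nat list" where
  "bin_msd n = (if n = 0 then [] else bin_msd (n div 2) @ [n mod 2])"

definition two_automatic :: "(nat \<Rightarrow> 'd) \<Rightarrow> bool" where
  "two_automatic a \<longleftrightarrow>
     (\<exists>(Q :: nat set) q0 (\<delta> :: nat \<Rightarrow> nat \<Rightarrow> nat) (out :: nat \<Rightarrow> 'd).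
        finite Q \<and> q0 \<in> Q \<and> (\<forall>q\<in>Q. \<forall>d\<in>{0,1}. \<delta> q d \<in> Q) \<and>
        (\<forall>n. out (foldl \<delta> q0 (bin_msd n)) = a n))"

end

theory Submission
  imports Defs
begin

text \<open>Let \<open>L = |h(1)|\<close>. Since \<open>|h(\<tau>(a))| - L\<close> is \<open>D = |h(2)| - L\<close>, \<open>0\<close>, \<open>-D\<close>, \<open>0\<close>
  for \<open>a = 0, 1, 2, 3\<close>, and in \<open>g\<^sup>\<omega>(0)\<close> the letters following \<open>0, 1\<close> are exactly the
  letters \<open>1, 2\<close>, the image under \<open>h\<close> of the first \<open>k\<close> letters of \<open>vtm\<close> has length
  \<open>k L + e\<^sub>k\<close>, where \<open>e\<^sub>k\<close> is \<open>D\<close> or \<open>0\<close> according to whether the \<open>k\<close>-th letter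
  of \<open>g\<^sup>\<omega>(0)\<close> lies in \<open>{1, 2}\<close> or not, and \<open>|e\<^sub>k| \<le> L\<close>.
  Hence, writing \<open>m = n L + r\<close> with \<open>r < L\<close>, the \<open>m\<close>-th letter of \<open>h(vtm)\<close> is determined
  by \<open>r\<close> and the letters of \<open>g\<^sup>\<omega>(0)\<close> at positions \<open>n - 1, n, n + 1\<close>. Appending a binary
  digit to \<open>m\<close> appends one to \<open>n\<close> (the carry out of \<open>2r + d\<close>), and the letters of a fixed
  point of a 2-uniform morphism around \<open>2n + d\<close> are determined by those around \<open>n\<close>;
  so these data form the states of a finite automaton.\<close>

declare bin_msd.simps [simp del] \<comment> \<open>its equation is unconditional and makes simp loop\<close>

text \<open>The values of \<open>x\<close> serve as the states of an automaton reading binary digits: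
  digit \<open>d\<close> leads from \<open>x n\<close> to \<open>x (2n + d)\<close>.\<close>

definition two_recursive :: "(nat \<Rightarrow> 's) \<Rightarrow> bool" where
  "two_recursive x \<longleftrightarrow> (\<exists>\<delta>. \<forall>n d. d < 2 \<longrightarrow> x (2 * n + d) = \<delta> (x n) d)"

lemma two_automatic_if_two_recursive:
  fixes x :: "nat \<Rightarrow> 's" and out :: "'s \<Rightarrow> 'd"
  assumes "finite (range x)" and "two_recursive x"
  shows "two_automatic (\<lambda>n. out (x n))"
proof -
  obtain \<delta> where \<delta>: "\<And>n d. d < 2 \<Longrightarrow> x (2 * n + d) = \<delta> (x n) d"
    using assms(2) unfolding two_recursive_def by blast
  obtain f :: "'s \<Rightarrow> nat" where inj: "inj_on f (range x)"
    using finite_imp_inj_to_nat_seg[OF assms(1)] by blast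
  define g where "g = inv_into (range x) f"
  have g_f: "g (f (x n)) = x n" for n
    unfolding g_def using inj by simp
  define \<delta>' where "\<delta>' q d = f (\<delta> (g q) d)" for q d
  have \<delta>'_f: "d < 2 \<Longrightarrow> \<delta>' (f (x n)) d = f (x (2 * n + d))" for n d
    by (simp add: \<delta>'_def g_f \<delta>)
  have run: "foldl \<delta>' (f (x 0)) (bin_msd n) = f (x n)" for n
  proof (induction n rule: bin_msd.induct)
    case (1 n)
    show ?case
    proof (cases "n = 0")
      case True
      then show ?thesis
        by (simp add: bin_msd.simps)
    next
      case False
      then have "foldl \<delta>' (f (x 0)) (bin_msd n) = \<delta>' (f (x (n div 2))) (n mod 2)"
        using 1 by (subst bin_msd.simps) simp
      also have "\<dots> = f (x n)"
        by (simp add: \<delta>'_f)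
      finally show ?thesis .
    qed
  qed
  show ?thesis
    unfolding two_automatic_def
  proof (intro exI conjI ballI allI)
    show "finite (f ` range x)" and "f (x 0) \<in> f ` range x"
      using assms(1) by simp_all
    show "\<delta>' q d \<in> f ` range x" if "q \<in> f ` range x" and "d \<in> {0, 1}" for q d
    proof -
      from that obtain n where "q = f (x n)" and "d < 2"
        by auto
      then show ?thesis
        by (simp add: \<delta>'_f)
    qed
    show "(\<lambda>q. out (g q)) (foldl \<delta>' (f (x 0)) (bin_msd n)) = out (x n)" for n
      by (simp add: run g_f)
  qed
qed

text \<open>The flag records \<open>n = 0\<close>, where \<open>x (n - 1)\<close> is the junk value \<open>x 0\<close>.\<close>

definition window :: "(nat \<Rightarrow> 'a) \<Rightarrow> nat \<Rightarrow> 'a \<times> 'a \<times> 'a \<times> bool" where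
  "window x n = (x (n - 1), x n, x (Suc n), n = 0)"

lemma finite_range_window: "finite (range x) \<Longrightarrow> finite (range (window x))"
proof (rule finite_subset)
  show "range (window x) \<subseteq> range x \<times> range x \<times> range x \<times> UNIV"
    by (auto simp: window_def)
qed simp_all

lemma two_recursive_window:
  assumes "two_recursive x"
  shows "two_recursive (window x)"
proof -
  obtain f where f: "\<And>n d. d < 2 \<Longrightarrow> x (2 * n + d) = f (x n) d"
    using assms unfolding two_recursive_def by blast
  have x_0: "f (x 0) 0 = x 0"
    using f[of 0 0, simplified] by (rule sym)
  have x_pred_double: "x (2 * n - 1) = (if n = 0 then f (x n) 0 else f (x (n - 1)) 1)" for n
  proof (cases n)
    case 0
    then show ?thesis
      by (simp add: x_0)
  next
    case (Suc k)
    then show ?thesis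
      using f[of 1 k] by simp
  qed
  define step where "step = (\<lambda>(p, u, v, z) (d :: nat).
    if d = 0 then (if z then f u 0 else f p 1, f u 0, f u 1, z) else (f u 0, f u 1, f v 0, False))"
  have "window x (2 * n + d) = step (window x n) d" if "d < 2" for n d
  proof -
    from that consider "d = 0" | "d = 1" by linarith
    then show ?thesis
    proof cases
      case 1
      then show ?thesis
        using f[of 0 n] f[of 1 n] x_pred_double[of n] by (simp add: window_def step_def)
    next
      case 2
      then show ?thesis
        using f[of 0 n] f[of 1 n] f[of 0 "Suc n"] by (simp add: window_def step_def)
    qed
  qed
  then show ?thesis
    unfolding two_recursive_def by blast
qed

lemma finite_range_div_mod:
  fixes y :: "nat \<Rightarrow> 'a" and L :: nat
  assumes "finite (range y)" and "0 < L"
  shows "finite (range (\<lambda>m. (y (m div L), m mod L)))"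
proof (rule finite_subset)
  show "range (\<lambda>m. (y (m div L), m mod L)) \<subseteq> range y \<times> {..<L}"
    using assms(2) by auto
qed (use assms(1) in simp)

lemma two_recursive_div_mod:
  fixes y :: "nat \<Rightarrow> 'a" and L :: nat
  assumes "two_recursive y" and "0 < L"
  shows "two_recursive (\<lambda>m. (y (m div L), m mod L))"
proof -
  obtain \<delta> where \<delta>: "\<And>n d. d < 2 \<Longrightarrow> y (2 * n + d) = \<delta> (y n) d"
    using assms(1) unfolding two_recursive_def by blast
  define \<delta>' where "\<delta>' = (\<lambda>(q, r) d. (\<delta> q ((2 * r + d) div L), (2 * r + d) mod L))"
  have "(y ((2 * m + d) div L), (2 * m + d) mod L) = \<delta>' (y (m div L), m mod L) d" if "d < 2" for m d
  proof -
    define r where "r = 2 * (m mod L) + d"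
    have m: "2 * m + d = r + 2 * (m div L) * L"
      using div_mult_mod_eq[of m L] unfolding r_def by linarith
    have "r < 2 * L"
      unfolding r_def using that mod_less_divisor[OF assms(2), of m] by linarith
    then have carry: "r div L < 2"
      by (simp add: div_less_iff_less_mult)
    have "(2 * m + d) div L = 2 * (m div L) + r div L" and "(2 * m + d) mod L = r mod L"
      unfolding m using assms(2) by simp_all
    then show ?thesis
      using \<delta>[OF carry] by (simp add: \<delta>'_def r_def)
  qed
  then show ?thesis
    unfolding two_recursive_def by blast
qed

lemma length_gsym [simp]: "length (gsym a) = 2"
  by (simp add: gsym_def)

lemma nth_gsym_le_3: "d < 2 \<Longrightarrow> gsym a ! d \<le> 3"
  by (auto simp: gsym_def less_2_cases_iff)

lemma gmor_Cons: "gmor (a # xs) = gsym a @ gmor xs"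
  by (simp add: gmor_def)

lemma gmor_append: "gmor (xs @ ys) = gmor xs @ gmor ys"
  by (simp add: gmor_def)

lemma length_gmor: "length (gmor xs) = 2 * length xs"
  by (induction xs) (simp_all add: gmor_def)

lemma nth_gmor: "i < 2 * length xs \<Longrightarrow> gmor xs ! i = gsym (xs ! (i div 2)) ! (i mod 2)"
proof (induction xs arbitrary: i)
  case (Cons a xs)
  show ?case
  proof (cases "i < 2")
    case True
    then show ?thesis
      by (simp add: gmor_Cons nth_append)
  next
    case False
    then obtain j where i: "i = Suc (Suc j)"
      by (metis less_2_cases_iff not_less0 old.nat.exhaust)
    then show ?thesis
      using Cons by (simp add: gmor_Cons nth_append)
  qed
qed simp

lemma funpow_gmor_append: "(gmor ^^ k) (xs @ ys) = (gmor ^^ k) xs @ (gmor ^^ k) ys"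
  by (induction k) (simp_all add: gmor_append)

lemma length_funpow_gmor: "length ((gmor ^^ k) xs) = 2 ^ k * length xs"
  by (induction k) (simp_all add: length_gmor)

lemma funpow_gmor_Suc_0: "(gmor ^^ Suc k) [0] = (gmor ^^ k) [0] @ (gmor ^^ k) [1]"
proof -
  have "gmor [0] = [0] @ [1]"
    by (simp add: gmor_def gsym_def)
  then show ?thesis
    by (simp only: funpow_Suc_right o_apply funpow_gmor_append)
qed

lemma nth_funpow_gmor_stable:
  assumes "i < 2 ^ k" and "k \<le> j"
  shows "(gmor ^^ j) [0] ! i = (gmor ^^ k) [0] ! i"
  using assms(2)
proof (induction j rule: dec_induct)
  case (step j)
  have "(2::nat) ^ k \<le> 2 ^ j"
    using step.hyps(1) by (simp add: power_increasing)
  with assms(1) have "i < 2 ^ j"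
    by (rule less_le_trans)
  then have "i < length ((gmor ^^ j) [0])"
    by (simp add: length_funpow_gmor)
  then have "(gmor ^^ Suc j) [0] ! i = (gmor ^^ j) [0] ! i"
    by (simp only: funpow_gmor_Suc_0 nth_append if_True)
  then show ?case
    using step.IH by simp
qed simp

lemma gomega_eq_nth_funpow_gmor: "i < 2 ^ k \<Longrightarrow> gomega i = (gmor ^^ k) [0] ! i"
proof -
  assume "i < 2 ^ k"
  moreover have "i < 2 ^ Suc i"
    using less_exp[of "Suc i"] by linarith
  ultimately show ?thesis
    unfolding gomega_def
    by (metis max.cobounded1 max.cobounded2 nth_funpow_gmor_stable)
qed

lemma gomega_double_add: "d < 2 \<Longrightarrow> gomega (2 * n + d) = gsym (gomega n) ! d"
proof -
  assume d: "d < 2"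
  have "2 * n + d < 4 * 2 ^ n"
    using d less_exp[of n] by linarith
  then have "gomega (2 * n + d) = (gmor ^^ Suc (Suc n)) [0] ! (2 * n + d)"
    by (intro gomega_eq_nth_funpow_gmor) simp
  also have "\<dots> = gsym ((gmor ^^ Suc n) [0] ! n) ! d"
  proof -
    have "2 * n + d < 2 * length ((gmor ^^ Suc n) [0])"
      using \<open>2 * n + d < 4 * 2 ^ n\<close> by (simp add: length_funpow_gmor length_gmor)
    from nth_gmor[OF this] show ?thesis
      using d by simp
  qed
  also have "\<dots> = gsym (gomega n) ! d"
    by (simp only: gomega_def)
  finally show ?thesis .
qed

lemma two_recursive_gomega: "two_recursive gomega"
  unfolding two_recursive_def
  by (intro exI[of _ "\<lambda>a d. gsym a ! d"]) (simp add: gomega_double_add)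

lemma gomega_le_3: "gomega n \<le> 3"
  using gomega_double_add[of "n mod 2" "n div 2"] nth_gsym_le_3[of "n mod 2"] by simp

lemma finite_range_gomega: "finite (range gomega)"
  using gomega_le_3 by (meson finite_atMost finite_subset image_subsetI atMost_iff)

lemma gomega_Suc_in_12_iff: "gomega (Suc n) \<in> {1, 2} \<longleftrightarrow> gomega n \<in> {0, 1}"
proof (induction n rule: less_induct)
  case (less n)
  have cases: "gomega k \<in> {0, 1, 2, 3}" for k
    using gomega_le_3[of k] by auto
  consider k where "n = 2 * k" | k where "n = 2 * k + 1"
    by (metis odd_two_times_div_two_nat even_two_times_div_two oddE)
  then show ?case
  proof cases
    case 1
    then show ?thesis
      using gomega_double_add[of 0 k] gomega_double_add[of 1 k] cases[of k]
      by (auto simp: gsym_def)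
  next
    case 2
    then have "gomega (Suc k) \<in> {1, 2} \<longleftrightarrow> gomega k \<in> {0, 1}"
      using less by simp
    then show ?thesis
      using 2 gomega_double_add[of 1 k] gomega_double_add[of 0 "Suc k"] cases[of k] cases[of "Suc k"]
      by (auto simp: gsym_def)
  qed
qed

lemma morph_prefix_Suc: "morph_prefix h w (Suc k) = morph_prefix h w k @ h (w k)"
  by (simp add: morph_prefix_def)

lemma morph_prefix_add:
  "morph_prefix h w (k + j) = morph_prefix h w k @ concat (map (\<lambda>i. h (w i)) [k..<k + j])"
  by (simp add: morph_prefix_def upt_add_eq_append[of 0 k j])

lemma morph_image_eq_nth:
  assumes "m < length (morph_prefix h w k)"
  shows "morph_image h w m = morph_prefix h w k ! m"
proof -
  define j where "j = (LEAST j. m < length (morph_prefix h w j))"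
  have j: "m < length (morph_prefix h w j)"
    unfolding j_def using assms by (rule LeastI)
  have "j \<le> k"
    unfolding j_def using assms by (rule Least_le)
  then obtain i where "k = j + i"
    using le_Suc_ex by blast
  then show ?thesis
    using j by (simp add: morph_image_def j_def[symmetric] morph_prefix_add nth_append)
qed

lemma length_morph_prefix_eq:
  fixes c :: "nat \<Rightarrow> int"
  assumes "\<And>k. int (length (h (w k))) = int L + c (Suc k) - c k" and "c 0 = 0"
  shows "int (length (morph_prefix h w k)) = int k * int L + c k"
proof (induction k)
  case 0
  then show ?case
    using assms(2) by (simp add: morph_prefix_def)
next
  case (Suc k)
  then show ?case
    using assms(1)[of k] by (simp add: morph_prefix_Suc algebra_simps)
qed

lemma morph_image_block:
  fixes c :: "nat \<Rightarrow> int"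
  assumes len: "\<And>k. int (length (h (w k))) = int L + c (Suc k) - c k" and "c 0 = 0"
    and bound: "\<And>k. \<bar>c k\<bar> \<le> int L" and "r < L"
  shows "morph_image h w (n * L + r) =
    (h (w (n - 1)) @ h (w n) @ h (w (Suc n))) ! nat (int r - c n + int (length (h (w (n - 1)))))"
proof -
  note prefix = length_morph_prefix_eq[of h w L c, OF len \<open>c 0 = 0\<close>]
  have "int (n * L + r) < int (length (morph_prefix h w (Suc (Suc n))))"
    using prefix[of "Suc (Suc n)"] bound[of "Suc (Suc n)"] \<open>r < L\<close> by (simp add: algebra_simps)
  then have "n * L + r < length (morph_prefix h w (Suc (Suc n)))"
    by (simp only: of_nat_less_iff)
  then have image: "morph_image h w (n * L + r) = morph_prefix h w (Suc (Suc n)) ! (n * L + r)"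
    by (rule morph_image_eq_nth)
  show ?thesis
  proof (cases n)
    case 0
    have "(h (w 0) @ h (w 0) @ h (w 1)) ! (length (h (w 0)) + r) = (h (w 0) @ h (w 1)) ! r"
      by (rule nth_append_length_plus)
    then show ?thesis
      using image 0 \<open>c 0 = 0\<close> by (simp add: morph_prefix_def nat_int_add add.commute)
  next
    case (Suc k)
    have "int (n * L + r) = int (length (morph_prefix h w k)) + (int r - c n + int (length (h (w k))))"
      using Suc prefix[of k] len[of k] by (simp add: algebra_simps)
    moreover have "0 \<le> int r - c n + int (length (h (w k)))"
      using Suc len[of k] bound[of k] by simp
    ultimately have "n * L + r = length (morph_prefix h w k) + nat (int r - c n + int (length (h (w k))))"
      by linarith
    then show ?thesis
      using image Suc by (simp add: morph_prefix_Suc)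
  qed
qed

lemma gomega_0: "gomega 0 = 0"
  by (simp add: gomega_def gmor_def gsym_def)

text \<open>\<open>|h(vtm\<^sub>0 \<dots> vtm\<^sub>k\<^sub>-\<^sub>1)| = k |h(1)| + prefix_offset h (gomega k)\<close>.\<close>

definition prefix_offset :: "(nat \<Rightarrow> 'd list) \<Rightarrow> nat \<Rightarrow> int" where
  "prefix_offset h a = (if a \<in> {1, 2} then int (length (h 2)) - int (length (h 1)) else 0)"

lemma length_h_vtm:
  assumes "length (h 0) + length (h 2) = 2 * length (h 1)"
  shows "int (length (h (vtm k))) =
    int (length (h 1)) + prefix_offset h (gomega (Suc k)) - prefix_offset h (gomega k)"
  using gomega_Suc_in_12_iff[of k] gomega_le_3[of k] assms
  by (auto simp: vtm_def tau_def prefix_offset_def le_Suc_eq)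

lemma abs_prefix_offset_le:
  assumes "length (h 0) + length (h 2) = 2 * length (h 1)"
  shows "\<bar>prefix_offset h a\<bar> \<le> int (length (h 1))"
  using assms by (auto simp: prefix_offset_def abs_le_iff)

lemma morph_image_h_vtm:
  assumes "length (h 0) + length (h 2) = 2 * length (h 1)" and "r < length (h 1)"
  shows "morph_image h vtm (n * length (h 1) + r) =
    (h (vtm (n - 1)) @ h (vtm n) @ h (vtm (Suc n))) !
      nat (int r - prefix_offset h (gomega n) + int (length (h (vtm (n - 1)))))"
  using assms(2) length_h_vtm[OF assms(1)] abs_prefix_offset_le[OF assms(1)]
  by (intro morph_image_block) (simp_all add: gomega_0 prefix_offset_def)

theorem theorem3:
  fixes \<Delta> :: "'d set" and h :: "nat \<Rightarrow> 'd list"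
  assumes "finite \<Delta>"
    and "\<forall>a\<in>{0,1,2::nat}. set (h a) \<subseteq> \<Delta>"
    and "h 0 \<noteq> [] \<or> h 1 \<noteq> [] \<or> h 2 \<noteq> []"
    and "length (h 0) + length (h 2) = 2 * length (h 1)"
  shows "two_automatic (morph_image h vtm)"
proof -
  \<comment> \<open>The output alphabet in \<open>two_automatic\<close> is the type \<open>'d\<close>.\<close>
  define L where "L = length (h 1)"
  have "0 < L"
    using assms(3,4) unfolding L_def by auto
  define out where "out = (\<lambda>((p, u, v, _ :: bool), r).
    (h (tau p) @ h (tau u) @ h (tau v)) ! nat (int r - prefix_offset h u + int (length (h (tau p)))))"
  have "morph_image h vtm = (\<lambda>m. out (window gomega (m div L), m mod L))"
  proof
    fix m
    show "morph_image h vtm m = out (window gomega (m div L), m mod L)"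
      using morph_image_h_vtm[OF assms(4), of "m mod L" "m div L"] \<open>0 < L\<close>
      by (simp add: out_def window_def vtm_def L_def)
  qed
  moreover have "two_automatic (\<lambda>m. out (window gomega (m div L), m mod L))"
    using two_automatic_if_two_recursive[of "\<lambda>m. (window gomega (m div L), m mod L)" out]
    by (simp add: finite_range_div_mod finite_range_window finite_range_gomega
        two_recursive_div_mod two_recursive_window two_recursive_gomega \<open>0 < L\<close>)
  ultimately show ?thesis
    by simp
qed

end
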